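(* Let $q\ge 1$ and $n$ be integers with $n\ge q-1$, let $a_1,\dots,a_n\in\mathbb{Z}_q$ be reduced residues (i.e. $\gcd(a_i,q)=1$ for all $i$), and let $\rho\in\mathbb{Z}_q$. Then the number of the $2^n$ choices $(\varepsilon_1,\dots,\varepsilon_n)\in\{0,1\}^n$ for which $\sum_{i=1}^n\varepsilon_i a_i\equiv\rho\pmod q$ is at least $\binom{n}{\lceil (n-q)/2\rceil}_q$. Moreover, this bound is best possible: for all such $q,n$ there exist reduced residues $a_1,\dots,a_n$ and a residue $\rho$ for which equality holds.
   Context: $\mathbb{Z}_q$ denotes the integers modulo $q$. For an integer $s$, the mod $q$ binomial coefficient is $\binom{n}{s}_q=|\{A\subseteq\{1,\dots,n\}: |A|\equiv s \pmod q\}|=\sum_{j\equiv s\ (\mathrm{mod}\ q),\,0\le j\le n}\binom{n}{j}$. *)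

theory Defs
  imports Complex_Main "HOL-Library.FuncSet" "HOL-Number_Theory.Cong"
begin

definition binom_mod :: "nat \<Rightarrow> int \<Rightarrow> nat \<Rightarrow> nat" where
  "binom_mod n s q = (\<Sum>j\<in>{j. j \<le> n \<and> [int j = s] (mod int q)}. n choose j)"

definition sol_count :: "nat \<Rightarrow> nat \<Rightarrow> (nat \<Rightarrow> int) \<Rightarrow> int \<Rightarrow> nat" where
  "sol_count q n a \<rho> =
     card {\<epsilon> \<in> {..<n} \<rightarrow>\<^sub>E {0, 1::int}. [(\<Sum>i<n. \<epsilon> i * a i) = \<rho>] (mod int q)}"

end

theory Submission
  imports Defs
begin

(*
  Let f_n(r) count the 0/1 vectors whose weighted sum is congruent to r, so that
  f_{n+1}(r) = f_n(r) + f_n(r - a_n).  By induction on n, for every set A of j residues the sum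
  of f_n over A is at most the sum of the mod q binomial coefficients over the j consecutive
  residues centred at n/2, which is what a = (1,...,1) gives.  In the inductive step A and its
  translate A' = A - a_n differ unless j = 0 or j = q, because a_n is a unit mod q; moving
  elements from the union of A and A' to their intersection yields two sets of sizes j - 1 and
  j + 1 with the same total, and the window sums obey the same Pascal recursion.  Applied to
  the complement of rho this gives the lower bound, with equality for a = (1,...,1).
*)

lemma card_filter_PiE_insert:
  assumes "x \<notin> S" "finite (T x)" "finite (Pi\<^sub>E S T)"
  shows "card {f \<in> Pi\<^sub>E (insert x S) T. P f} =
    (\<Sum>y\<in>T x. card {g \<in> Pi\<^sub>E S T. P (g(x := y))})"
proof -
  let ?upd = "\<lambda>(y, g). g(x := y)"
  let ?D = "SIGMA y:T x. {g \<in> Pi\<^sub>E S T. P (g(x := y))}"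
  have "{f \<in> Pi\<^sub>E (insert x S) T. P f} = ?upd ` ?D"
    by (auto simp: PiE_insert_eq)
  moreover have "inj_on ?upd ?D"
    by (rule inj_on_subset[OF inj_combinator[OF assms(1)]]) auto
  ultimately show ?thesis
    using assms(2,3) by (simp add: card_image)
qed

lemma bij_betw_mod_interval:
  fixes c m :: int
  assumes "m > 0"
  shows "bij_betw (\<lambda>x. x mod m) {c..<c + m} {0..<m}"
  by (rule bij_betw_byWitness[where f' = "\<lambda>r. c + (r - c) mod m"])
    (use assms in \<open>auto simp: mod_diff_left_eq mod_add_right_eq\<close>)

lemma inj_on_mod_translate:
  fixes u m :: int
  assumes "A \<subseteq> {0..<m}"
  shows "inj_on (\<lambda>x. (x - u) mod m) A"
proof (rule inj_onI)
  fix x y assume "x \<in> A" "y \<in> A" "(x - u) mod m = (y - u) mod m"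
  then have "x mod m = y mod m" "x \<in> {0..<m}" "y \<in> {0..<m}"
    using assms by (auto simp: mod_eq_dvd_iff)
  then show "x = y"
    by simp
qed

lemma coprime_nat_multiple_cong:
  fixes u d m :: int
  assumes "coprime u m" "m > 0"
  obtains k :: nat where "[int k * u = d] (mod m)"
proof -
  obtain v where v: "[u * v = 1] (mod m)"
    using cong_solve_coprime_int[OF assms(1)] by blast
  define k where "k = nat ((v * d) mod m)"
  have "[int k = v * d] (mod m)"
    using assms(2) by (simp add: k_def cong_def)
  then have "[int k * u = (u * v) * d] (mod m)"
    by (metis cong_scalar_right mult.commute mult.left_commute)
  also have "[(u * v) * d = 1 * d] (mod m)"
    using v by (rule cong_scalar_right)
  finally show ?thesis
    using that by simp
qed

lemma translation_invariant_residues_eq_all: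
  fixes u m :: int
  assumes "coprime u m" "A \<subseteq> {0..<m}" "A \<noteq> {}"
    and invariant: "(\<lambda>x. (x - u) mod m) ` A \<subseteq> A"
  shows "A = {0..<m}"
proof -
  obtain x0 where x0: "x0 \<in> A"
    using assms(3) by blast
  then have m_pos: "m > 0"
    using assms(2) by auto
  have iterate: "(x0 - int k * u) mod m \<in> A" for k
  proof (induction k)
    case 0
    then show ?case
      using x0 assms(2) by auto
  next
    case (Suc k)
    then have "((x0 - int k * u) mod m - u) mod m \<in> A"
      using invariant by blast
    then show ?case
      by (simp add: mod_diff_left_eq algebra_simps)
  qed
  have "y \<in> A" if y: "y \<in> {0..<m}" for y
  proof -
    obtain k where "[int k * u = x0 - y] (mod m)"
      using coprime_nat_multiple_cong[OF assms(1) m_pos] .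
    then have "[x0 - int k * u = x0 - (x0 - y)] (mod m)"
      by (intro cong_diff cong_refl)
    then have "(x0 - int k * u) mod m = y"
      using y by (simp add: cong_def)
    then show ?thesis
      using iterate[of k] by simp
  qed
  then show ?thesis
    using assms(2) by blast
qed

lemma sum_rebalance:
  fixes f :: "'a \<Rightarrow> 'b::comm_monoid_add"
  assumes "finite C" "B \<subseteq> C" "card B \<le> k" "k \<le> card C"
  obtains B' C' where "B' \<subseteq> C" "C' \<subseteq> C" "card B' = k"
    "card B' + card C' = card B + card C"
    "sum f B' + sum f C' = sum f B + sum f C"
proof -
  have fin_B: "finite B"
    using assms(1,2) by (rule finite_subset[rotated])
  have "k - card B \<le> card (C - B)"
    using assms fin_B by (simp add: card_Diff_subset)
  then obtain T where T: "T \<subseteq> C - B" "card T = k - card B"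
    by (meson obtain_subset_with_card_n)
  have fin_T: "finite T"
    using T(1) assms(1) by (meson finite_Diff finite_subset)
  show ?thesis
  proof (rule that[of "B \<union> T" "C - T"])
    have card_BT: "card (B \<union> T) = card B + card T"
      using T(1) fin_B fin_T by (intro card_Un_disjoint) auto
    then show "card (B \<union> T) = k"
      using T(2) assms(3) by simp
    have "card (C - T) = card C - card T"
      using T(1) fin_T by (intro card_Diff_subset) auto
    then show "card (B \<union> T) + card (C - T) = card B + card C"
      using card_BT T(2) assms(3,4) by simp
    have "sum f C = sum f T + sum f (C - T)"
      using T(1) assms(1) by (metis Diff_subset add.commute subset_trans sum.subset_diff)
    moreover have "sum f (B \<union> T) = sum f B + sum f T"
      using T(1) fin_B fin_T by (intro sum.union_disjoint) auto
    ultimately show "sum f (B \<union> T) + sum f (C - T) = sum f B + sum f C"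
      by (simp add: add.assoc)
  qed (use T assms(2) in auto)
qed

lemma sum_pair_le_neighbours:
  fixes f :: "'a \<Rightarrow> 'b::ordered_comm_monoid_add"
  assumes bound: "\<And>B. B \<subseteq> U \<Longrightarrow> sum f B \<le> g (card B)"
    and "finite U" "A \<subseteq> U" "A' \<subseteq> U" "card A' = card A" "A' \<noteq> A"
  shows "sum f A + sum f A' \<le> g (card A - 1) + g (card A + 1)"
proof -
  have fin: "finite A" "finite A'"
    using assms(2-4) finite_subset by auto
  have "A \<inter> A' \<noteq> A'"
    using assms(5,6) fin card_subset_eq[of A A'] by auto
  then have card_inter: "card (A \<inter> A') < card A"
    using fin assms(5) by (metis Int_lower2 psubsetI psubset_card_mono)
  have card_union: "card A \<le> card (A \<union> A')"
    using fin by (simp add: card_mono)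
  obtain B' C' where BC': "B' \<subseteq> A \<union> A'" "C' \<subseteq> A \<union> A'" "card B' = card A - 1"
    "card B' + card C' = card (A \<inter> A') + card (A \<union> A')"
    "sum f B' + sum f C' = sum f (A \<inter> A') + sum f (A \<union> A')"
    by (rule sum_rebalance[of "A \<union> A'" "A \<inter> A'" "card A - 1" f])
      (use fin card_inter card_union in auto)
  have card_C': "card C' = card A + 1"
    using BC'(3,4) card_Un_Int[OF fin] assms(5) card_inter by simp
  have "sum f A + sum f A' = sum f B' + sum f C'"
    using sum.union_inter[OF fin, of f] BC'(5) by (simp add: add.commute)
  also have "\<dots> \<le> g (card B') + g (card C')"
    using BC'(1,2) assms(3,4) by (intro add_mono bound) auto
  finally show ?thesis
    using BC'(3) card_C' by simp
qed

lemma ceiling_half_eq_div: "\<lceil>real_of_int m / 2\<rceil> = (m + 1) div 2"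
proof -
  have "\<lceil>real_of_int m / real_of_int 2\<rceil> = - (- m div 2)"
    by (rule ceiling_divide_eq_div)
  moreover have "- (- m div 2) = (m + 1) div 2"
    by presburger
  ultimately show ?thesis
    by simp
qed

lemma sol_count_0: "sol_count q 0 a \<rho> = (if [0 = \<rho>] (mod int q) then 1 else 0)"
  by (simp add: sol_count_def)

lemma sol_count_Suc:
  "sol_count q (Suc n) a \<rho> = sol_count q n a \<rho> + sol_count q n a (\<rho> - a n)"
proof -
  have sum_upd: "(\<Sum>i<Suc n. (g(n := y)) i * a i) = (\<Sum>i<n. g i * a i) + y * a n" for g y
  proof -
    have "(\<Sum>i<n. (g(n := y)) i * a i) = (\<Sum>i<n. g i * a i)"
      by (rule sum.cong) auto
    then show ?thesis by simp
  qed
  have "[a n + s = \<rho>] (mod int q) \<longleftrightarrow> [s = \<rho> - a n] (mod int q)" for s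
    by (simp add: cong_iff_dvd_diff algebra_simps)
  then show ?thesis
    unfolding sol_count_def lessThan_Suc
    by (subst card_filter_PiE_insert) (simp_all add: sum_upd finite_PiE)
qed

lemma sol_count_cong:
  assumes "[\<rho> = \<rho>'] (mod int q)"
  shows "sol_count q n a \<rho> = sol_count q n a \<rho>'"
proof -
  have "[s = \<rho>] (mod int q) \<longleftrightarrow> [s = \<rho>'] (mod int q)" for s
    using assms cong_sym cong_trans by metis
  then show ?thesis
    unfolding sol_count_def by simp
qed

lemma sum_sol_count_residues:
  assumes "q \<ge> 1"
  shows "(\<Sum>r\<in>{0..<int q}. sol_count q n a r) = 2 ^ n"
proof -
  define E where "E = {..<n} \<rightarrow>\<^sub>E {0, 1::int}"
  define fibre where "fibre r = {\<epsilon> \<in> E. [(\<Sum>i<n. \<epsilon> i * a i) = r] (mod int q)}" for r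
  have "E \<subseteq> (\<Union>r\<in>{0..<int q}. fibre r)"
  proof
    fix \<epsilon> assume "\<epsilon> \<in> E"
    then have "\<epsilon> \<in> fibre ((\<Sum>i<n. \<epsilon> i * a i) mod int q)"
      by (simp add: fibre_def cong_def)
    then show "\<epsilon> \<in> (\<Union>r\<in>{0..<int q}. fibre r)"
      using assms by fastforce
  qed
  then have E_fibres: "E = (\<Union>r\<in>{0..<int q}. fibre r)"
    by (auto simp: fibre_def)
  have "fibre r \<inter> fibre r' = {}" if "r \<in> {0..<int q}" "r' \<in> {0..<int q}" "r \<noteq> r'" for r r'
    using that by (auto simp: fibre_def cong_def)
  then have "card E = (\<Sum>r\<in>{0..<int q}. card (fibre r))"
    unfolding E_fibres by (intro card_UN_disjoint) (auto simp: fibre_def E_def finite_PiE)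
  moreover have "card E = 2 ^ n"
    by (simp add: E_def card_PiE numeral_2_eq_2)
  ultimately show ?thesis
    by (simp add: sol_count_def fibre_def E_def)
qed

lemma sum_sol_count_interval:
  assumes "q \<ge> 1"
  shows "(\<Sum>r\<in>{c..<c + int q}. sol_count q n a r) = 2 ^ n"
proof -
  have "(\<Sum>r\<in>{c..<c + int q}. sol_count q n a r) =
      (\<Sum>r\<in>{c..<c + int q}. sol_count q n a (r mod int q))"
    by (intro sum.cong refl sol_count_cong) (simp add: cong_def)
  also have "\<dots> = (\<Sum>r\<in>{0..<int q}. sol_count q n a r)"
    by (rule sum.reindex_bij_betw[OF bij_betw_mod_interval]) (use assms in simp)
  also have "\<dots> = 2 ^ n"
    using assms by (rule sum_sol_count_residues)
  finally show ?thesis .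
qed

lemma sum_sol_count_Suc_translate:
  assumes "A \<subseteq> {0..<int q}"
  shows "(\<Sum>r\<in>A. sol_count q (Suc n) a r) =
    (\<Sum>r\<in>A. sol_count q n a r) + (\<Sum>r\<in>(\<lambda>r. (r - a n) mod int q) ` A. sol_count q n a r)"
proof -
  have "(\<Sum>r\<in>(\<lambda>r. (r - a n) mod int q) ` A. sol_count q n a r) =
      (\<Sum>r\<in>A. sol_count q n a ((r - a n) mod int q))"
    using inj_on_mod_translate[OF assms] by (simp add: sum.reindex)
  also have "\<dots> = (\<Sum>r\<in>A. sol_count q n a (r - a n))"
    by (intro sum.cong refl sol_count_cong) (simp add: cong_def)
  finally show ?thesis
    by (simp add: sol_count_Suc sum.distrib)
qed

lemma binom_mod_eq_sum_atMost:
  assumes "n \<le> m"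
  shows "binom_mod n s q = (\<Sum>j\<le>m. if [int j = s] (mod int q) then n choose j else 0)"
proof -
  have "binom_mod n s q = (\<Sum>j\<in>{j \<in> {..m}. [int j = s] (mod int q)}. n choose j)"
    unfolding binom_mod_def using assms by (intro sum.mono_neutral_left) auto
  also have "\<dots> = (\<Sum>j\<le>m. if [int j = s] (mod int q) then n choose j else 0)"
    by (rule sum.inter_filter) simp
  finally show ?thesis .
qed

lemma binom_mod_0: "binom_mod 0 s q = (if [0 = s] (mod int q) then 1 else 0)"
  by (simp add: binom_mod_eq_sum_atMost[of 0 0])

lemma binom_mod_Suc: "binom_mod (Suc n) s q = binom_mod n s q + binom_mod n (s - 1) q"
proof -
  define F where "F m j = (if [int j = s] (mod int q) then m choose j else 0)" for m j
  define G where "G j = (if [int j = s - 1] (mod int q) then n choose j else 0)" for j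
  have "[int (Suc j) = s] (mod int q) \<longleftrightarrow> [int j = s - 1] (mod int q)" for j
    by (simp add: cong_iff_dvd_diff algebra_simps)
  then have pascal: "F (Suc n) (Suc j) = F n (Suc j) + G j" for j
    by (simp add: F_def G_def)
  have F_0: "F (Suc n) 0 = F n 0"
    by (simp add: F_def)
  have "binom_mod (Suc n) s q = F (Suc n) 0 + (\<Sum>j\<le>n. F (Suc n) (Suc j))"
    unfolding binom_mod_eq_sum_atMost[OF le_refl] F_def by (rule sum.atMost_Suc_shift)
  also have "\<dots> = (F n 0 + (\<Sum>j\<le>n. F n (Suc j))) + (\<Sum>j\<le>n. G j)"
    by (simp add: F_0 pascal sum.distrib)
  also have "\<dots> = (\<Sum>j\<le>Suc n. F n j) + (\<Sum>j\<le>n. G j)"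
    by (simp only: sum.atMost_Suc_shift)
  also have "\<dots> = binom_mod n s q + binom_mod n (s - 1) q"
    by (simp add: F_def G_def binom_mod_eq_sum_atMost[of n "Suc n"] binom_mod_eq_sum_atMost[of n n])
  finally show ?thesis .
qed

lemma sol_count_ones: "sol_count q n (\<lambda>_. 1) s = binom_mod n s q"
  by (induction n arbitrary: s) (simp_all add: sol_count_0 sol_count_Suc binom_mod_0 binom_mod_Suc)

(* The j consecutive residues starting at window_start n j = ceiling((n - j + 1) / 2) are
   centred at n/2; binom_window sums the mod q binomial coefficients over them. *)
definition window_start :: "nat \<Rightarrow> nat \<Rightarrow> int" where
  "window_start n j = (int n - int j + 2) div 2"

definition binom_window :: "nat \<Rightarrow> nat \<Rightarrow> nat \<Rightarrow> nat" where
  "binom_window q n j = (\<Sum>r\<in>{window_start n j..<window_start n j + int j}. binom_mod n r q)"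

lemma binom_window_Suc:
  assumes "j \<ge> 1"
  shows "binom_window q (Suc n) j = binom_window q n (j - 1) + binom_window q n (j + 1)"
proof -
  define c where "c = window_start (Suc n) j"
  define b where "b r = binom_mod n r q" for r
  have start_pred: "window_start n (j - 1) = c" and start_succ: "window_start n (j + 1) = c - 1"
    using assms by (simp_all add: c_def window_start_def of_nat_diff)
  have shift: "(\<Sum>r\<in>{c..<c + int j}. b (r - 1)) = (\<Sum>r\<in>{c - 1..<c + int j - 1}. b r)"
    by (rule sum.reindex_bij_witness[of _ "\<lambda>r. r + 1" "\<lambda>r. r - 1"]) auto
  have split_top: "{d..<c + int j} = insert (c + int j - 1) {d..<c + int j - 1}"
    if "d \<le> c + int j - 1" for d
    using that by auto
  have "binom_window q (Suc n) j =
      (\<Sum>r\<in>{c..<c + int j}. b r) + (\<Sum>r\<in>{c - 1..<c + int j - 1}. b r)"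
    by (simp add: binom_window_def binom_mod_Suc sum.distrib flip: shift c_def b_def)
  also have "\<dots> = (\<Sum>r\<in>{c..<c + int j - 1}. b r) + (\<Sum>r\<in>{c - 1..<c + int j}. b r)"
    using assms by (simp add: split_top)
  also have "\<dots> = binom_window q n (j - 1) + binom_window q n (j + 1)"
    unfolding binom_window_def start_pred start_succ b_def
    using assms by (simp add: of_nat_diff algebra_simps)
  finally show ?thesis .
qed

lemma binom_window_full:
  assumes "q \<ge> 1"
  shows "binom_window q n q = 2 ^ n"
  unfolding binom_window_def sol_count_ones[symmetric] using assms by (rule sum_sol_count_interval)

lemma sum_sol_count_0_le_binom_window:
  assumes "A \<subseteq> {0..<int q}"
  shows "(\<Sum>r\<in>A. sol_count q 0 a r) \<le> binom_window q 0 (card A)"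
proof (cases "A = {}")
  case False
  have fin: "finite A"
    using assms finite_subset by blast
  have "[0 = r] (mod int q) \<longleftrightarrow> r = 0" if "r \<in> A" for r
  proof -
    have "0 \<le> r" "r < int q"
      using that assms by auto
    then show ?thesis
      by (simp add: cong_def)
  qed
  then have "(\<Sum>r\<in>A. sol_count q 0 a r) = (\<Sum>r\<in>A. if r = 0 then 1 else 0)"
    by (intro sum.cong refl) (simp add: sol_count_0)
  also have "\<dots> \<le> 1"
    using fin by simp
  also have "1 \<le> binom_window q 0 (card A)"
  proof -
    have "card A \<ge> 1"
      using False fin by (simp add: Suc_le_eq card_gt_0_iff)
    then have "0 \<in> {window_start 0 (card A)..<window_start 0 (card A) + int (card A)}"
      by (auto simp: window_start_def)
    then have "binom_mod 0 0 q \<le> binom_window q 0 (card A)"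
      unfolding binom_window_def by (intro member_le_sum) auto
    then show ?thesis
      by (simp add: binom_mod_0)
  qed
  finally show ?thesis .
qed simp

lemma sum_sol_count_Suc_le_binom_window:
  assumes "coprime (a n) (int q)" "A \<subseteq> {0..<int q}" "A \<noteq> {}" "A \<noteq> {0..<int q}"
    and IH: "\<And>B. B \<subseteq> {0..<int q} \<Longrightarrow> sum (sol_count q n a) B \<le> binom_window q n (card B)"
  shows "(\<Sum>r\<in>A. sol_count q (Suc n) a r) \<le> binom_window q (Suc n) (card A)"
proof -
  define shift where "shift r = (r - a n) mod int q" for r
  have "q > 0"
    using assms(2,3) by force
  then have shift_sub: "shift ` A \<subseteq> {0..<int q}"
    by (auto simp: shift_def)
  have card_shift: "card (shift ` A) = card A"
    using inj_on_mod_translate[OF assms(2)] by (simp add: card_image shift_def)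
  have shift_ne: "shift ` A \<noteq> A"
    using translation_invariant_residues_eq_all[OF assms(1,2,3)] assms(4) by (auto simp: shift_def)
  have "(\<Sum>r\<in>A. sol_count q (Suc n) a r) =
      (\<Sum>r\<in>A. sol_count q n a r) + (\<Sum>r\<in>shift ` A. sol_count q n a r)"
    unfolding shift_def using assms(2) by (rule sum_sol_count_Suc_translate)
  also have "\<dots> \<le> binom_window q n (card A - 1) + binom_window q n (card A + 1)"
    by (rule sum_pair_le_neighbours[OF IH]) (use assms(2) shift_sub card_shift shift_ne in auto)
  also have "\<dots> = binom_window q (Suc n) (card A)"
  proof -
    have "card A \<ge> 1"
      using assms(2,3) finite_subset[OF assms(2)] by (simp add: Suc_le_eq card_gt_0_iff)
    then show ?thesis
      by (rule binom_window_Suc[symmetric])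
  qed
  finally show ?thesis .
qed

lemma sum_sol_count_le_binom_window:
  assumes "\<forall>i<n. coprime (a i) (int q)" "A \<subseteq> {0..<int q}"
  shows "(\<Sum>r\<in>A. sol_count q n a r) \<le> binom_window q n (card A)"
  using assms
proof (induction n arbitrary: A)
  case 0
  then show ?case
    by (simp add: sum_sol_count_0_le_binom_window)
next
  case (Suc n)
  consider "A = {}" | "A \<noteq> {}" "A = {0..<int q}" | "A \<noteq> {}" "A \<noteq> {0..<int q}"
    by blast
  then show ?case
  proof cases
    case 1
    then show ?thesis
      by simp
  next
    case 2
    then have "q \<ge> 1"
      by (auto simp: Suc_le_eq)
    then show ?thesis
      using 2 sum_sol_count_interval[where c = 0 and n = "Suc n"] by (simp add: binom_window_full)
  next
    case 3
    then show ?thesis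
      by (intro sum_sol_count_Suc_le_binom_window) (use Suc.prems Suc.IH in auto)
  qed
qed

(* (n - q + 1) div 2 is the residue just below the window of length q - 1, which it completes
   to a full period. *)
lemma binom_mod_add_binom_window:
  assumes "q \<ge> 1"
  shows "binom_mod n ((int n - int q + 1) div 2) q + binom_window q n (q - 1) = 2 ^ n"
proof -
  define c where "c = window_start n (q - 1)"
  have "{c - 1..<c - 1 + int q} = insert (c - 1) {c..<c + int (q - 1)}"
    using assms by auto
  then have "binom_mod n (c - 1) q + binom_window q n (q - 1) = 2 ^ n"
    unfolding binom_window_def c_def[symmetric]
    using sum_sol_count_interval[OF assms, where c = "c - 1" and n = n and a = "\<lambda>_. 1"]
    by (simp add: sol_count_ones)
  moreover have "c - 1 = (int n - int q + 1) div 2"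
    using assms by (simp add: c_def window_start_def of_nat_diff)
  ultimately show ?thesis
    by simp
qed

lemma binom_mod_le_sol_count:
  assumes "q \<ge> 1" "\<forall>i<n. coprime (a i) (int q)"
  shows "binom_mod n ((int n - int q + 1) div 2) q \<le> sol_count q n a \<rho>"
proof -
  define A where "A = {0..<int q} - {\<rho> mod int q}"
  have \<rho>_mem: "\<rho> mod int q \<in> {0..<int q}"
    using assms(1) by simp
  have "2 ^ n = sol_count q n a (\<rho> mod int q) + (\<Sum>r\<in>A. sol_count q n a r)"
    using sum_sol_count_interval[OF assms(1), where c = 0] \<rho>_mem by (simp add: A_def sum.remove)
  moreover have "sol_count q n a (\<rho> mod int q) = sol_count q n a \<rho>"
    by (rule sol_count_cong) (simp add: cong_def)
  moreover have "(\<Sum>r\<in>A. sol_count q n a r) \<le> binom_window q n (q - 1)"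
    using sum_sol_count_le_binom_window[OF assms(2), of A] \<rho>_mem by (simp add: A_def)
  ultimately show ?thesis
    using binom_mod_add_binom_window[OF assms(1), of n] by linarith
qed

theorem corollary2:
  fixes q n :: nat
  assumes "q \<ge> 1" and "n + 1 \<ge> q"
  shows "(\<forall>(a :: nat \<Rightarrow> int) (\<rho> :: int). (\<forall>i<n. coprime (a i) (int q)) \<longrightarrow>
            sol_count q n a \<rho> \<ge> binom_mod n \<lceil>(real n - real q) / 2\<rceil> q)
       \<and> (\<exists>(a :: nat \<Rightarrow> int) (\<rho> :: int). (\<forall>i<n. coprime (a i) (int q)) \<and>
            sol_count q n a \<rho> = binom_mod n \<lceil>(real n - real q) / 2\<rceil> q)"
proof -
  define r where "r = \<lceil>(real n - real q) / 2\<rceil>"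
  have "r = (int n - int q + 1) div 2"
    using ceiling_half_eq_div[of "int n - int q"] by (simp add: r_def)
  then have lower: "binom_mod n r q \<le> sol_count q n a \<rho>"
    if "\<forall>i<n. coprime (a i) (int q)" for a \<rho>
    using binom_mod_le_sol_count[OF assms(1) that] by simp
  have sharp: "sol_count q n (\<lambda>_. 1) r = binom_mod n r q"
    by (rule sol_count_ones)
  show ?thesis
    unfolding r_def[symmetric]
  proof
    show "\<forall>a \<rho>. (\<forall>i<n. coprime (a i) (int q)) \<longrightarrow> binom_mod n r q \<le> sol_count q n a \<rho>"
      using lower by blast
    show "\<exists>a \<rho>. (\<forall>i<n. coprime (a i) (int q)) \<and> sol_count q n a \<rho> = binom_mod n r q"
      by (intro exI[of _ "\<lambda>_. 1"] exI[of _ r]) (simp add: sharp)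
  qed
qed

end
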